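(* Fix $\gamma\in(0,1]$ and $0<\alpha<0.25$, let $\xi>0$ be arbitrarily small, and set $\tilde k=(\alpha+\xi)\log_2N$. Then for all sufficiently large $N$ and every integer $k$ with $\tilde k\le k\le b$, $$\lambda(s^*_k+1)\le\lambda(\lambda^{2^k-1}+1)\le\sqrt\lambda.$$
   Context: Let $N\ge1$, $\lambda=1-\gamma/N^\alpha$, and $b=b(N)\ge1$ an integer with $b=O(\log N)$. The mean-field vector field is $f_k(s)=\lambda(s_{k-1}^2-s_k^2)-(s_k-s_{k+1})$, $k=1,\dots,b$, with $s_0=1,s_{b+1}=0$, and $s^*$ is its unique equilibrium in $\{s\in\mathbb R^b:1\ge s_1\ge\cdots\ge s_b\ge0\}$, i.e. $s^*_0=1$, $\lambda((s^*_{k-1})^2-(s^*_k)^2)-(s^*_k-s^*_{k+1})=0$ for $1\le k\le b-1$ and $\lambda((s^*_{b-1})^2-(s^*_b)^2)-s^*_b=0$. *)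

theory Defs
  imports "HOL-Analysis.Analysis" "HOL-Library.Landau_Symbols"
begin

definition lam :: "real \<Rightarrow> real \<Rightarrow> nat \<Rightarrow> real" where
  "lam \<gamma> \<alpha> N = 1 - \<gamma> / (real N powr \<alpha>)"

text \<open>Equilibrium of the mean-field vector field on coordinates 1..b, represented as a
  function nat => real with s 0 = 1 and s k = 0 for k > b (so s (b+1) = 0), lying in
  the region 1 >= s 1 >= ... >= s b >= 0, with f_k(s) = 0 for 1 <= k <= b.\<close>
definition is_equilibrium :: "real \<Rightarrow> nat \<Rightarrow> (nat \<Rightarrow> real) \<Rightarrow> bool" where
  "is_equilibrium l b s \<longleftrightarrow>
     s 0 = 1 \<and> (\<forall>k>b. s k = 0) \<and>
     (\<forall>k\<in>{1..b}. s k \<le> s (k - 1)) \<and> s b \<ge> 0 \<and>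
     (\<forall>k\<in>{1..b}. l * ((s (k - 1))\<^sup>2 - (s k)\<^sup>2) - (s k - s (k + 1)) = 0)"

definition sstar :: "real \<Rightarrow> nat \<Rightarrow> nat \<Rightarrow> real" where
  "sstar l b = (THE s. is_equilibrium l b s)"

end

theory Submission
  imports Defs "HOL-Real_Asymp.Real_Asymp"
begin

text \<open>Summing the equilibrium equations from \<open>k\<close> to \<open>b\<close> telescopes to
  \<open>s\<^sub>k = \<lambda>(s\<^sub>k\<^sub>-\<^sub>1\<^sup>2 - s\<^sub>b\<^sup>2)\<close>, so an equilibrium is the orbit of \<open>x \<mapsto> \<lambda>(x\<^sup>2 - t\<^sup>2)\<close>
  started at 1, where \<open>t = s\<^sub>b\<close> is the value of the orbit at step \<open>b\<close>. Such a \<open>t\<close>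
  exists by the intermediate value theorem and is unique because the orbit is strictly
  decreasing in \<open>t\<close>. Dropping \<open>t\<^sup>2\<close> gives \<open>s\<^sub>k \<le> \<lambda>\<^bsup>2\<^sup>k - 1\<^esup>\<close>. Finally
  \<open>\<lambda>\<^bsup>2\<^sup>k\<^esup> \<le> exp (-(1 - \<lambda>) 2\<^sup>k) \<le> exp (-\<gamma> N\<^sup>\<xi>)\<close> is \<open>o(1 - \<lambda>)\<close>, and
  \<open>\<lambda> + (1 - \<lambda>)/4 \<le> \<surd>\<lambda>\<close>.\<close>

fun orbit :: "real \<Rightarrow> real \<Rightarrow> nat \<Rightarrow> real" where
  "orbit l t 0 = 1"
| "orbit l t (Suc k) = l * ((orbit l t k)\<^sup>2 - t\<^sup>2)"

fun orbit_margin :: "real \<Rightarrow> real \<Rightarrow> nat \<Rightarrow> real" where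
  "orbit_margin l t 0 = 1 - t"
| "orbit_margin l t (Suc k) = min (orbit_margin l t k) (orbit l t (Suc k) - t)"

lemma continuous_on_orbit: "continuous_on A (\<lambda>t. orbit l t k)"
  by (induction k) (auto intro!: continuous_intros)

lemma continuous_on_orbit_margin: "continuous_on A (\<lambda>t. orbit_margin l t k)"
  by (induction k) (auto intro!: continuous_intros continuous_on_orbit)

lemma orbit_margin_le: "j \<le> k \<Longrightarrow> orbit_margin l t k \<le> orbit l t j - t"
  by (induction k) (auto simp: le_Suc_eq)

lemma orbit_margin_attained: "\<exists>j\<le>k. orbit_margin l t k = orbit l t j - t"
proof (induction k)
  case (Suc k)
  then obtain j where "j \<le> k" "orbit_margin l t k = orbit l t j - t" by blast
  then show ?case by (auto simp: min_def intro: le_SucI)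
qed simp

lemma orbit_zero_pos: "0 < l \<Longrightarrow> 0 < orbit l 0 k"
  by (induction k) auto

lemma orbit_step_le:
  assumes "0 < l" "l \<le> 1" "0 \<le> orbit l t k" "orbit l t k \<le> 1"
  shows "orbit l t (Suc k) \<le> orbit l t k"
proof -
  have "orbit l t (Suc k) \<le> l * (orbit l t k)\<^sup>2"
    using assms by (simp add: mult_left_mono)
  also have "\<dots> \<le> 1 * orbit l t k"
    using assms by (intro mult_mono) (auto simp: power2_eq_square mult_left_le_one_le)
  finally show ?thesis by simp
qed

lemma orbit_le_one:
  assumes "0 < l" "l \<le> 1" "\<forall>j<k. 0 \<le> orbit l t j"
  shows "orbit l t k \<le> 1"
  using assms(3)
proof (induction k)
  case (Suc k)
  then show ?case using orbit_step_le[OF assms(1,2)] by fastforce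
qed simp

lemma orbit_strict_antimono:
  assumes "0 < l" "0 \<le> t" "t < t'" "\<forall>j<k. 0 \<le> orbit l t' j" "0 < k"
  shows "orbit l t' k < orbit l t k"
proof -
  have "orbit l t' k \<le> orbit l t k \<and> (0 < k \<longrightarrow> orbit l t' k < orbit l t k)"
    using assms(4)
  proof (induction k)
    case (Suc k)
    then have "(orbit l t' k)\<^sup>2 \<le> (orbit l t k)\<^sup>2" by (intro power_mono) auto
    moreover have "t\<^sup>2 < t'\<^sup>2" using assms by (intro power_strict_mono) auto
    ultimately show ?case using assms(1) by simp
  qed simp
  then show ?thesis using assms(5) by blast
qed

lemma orbit_le_power:
  assumes "0 < l" "\<forall>j<k. 0 \<le> orbit l t j"
  shows "orbit l t k \<le> l ^ (2 ^ k - 1)"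
  using assms(2)
proof (induction k)
  case (Suc k)
  then have IH: "orbit l t k \<le> l ^ (2 ^ k - 1)" "0 \<le> orbit l t k" by auto
  have "orbit l t (Suc k) \<le> l * (orbit l t k)\<^sup>2"
    using assms(1) by (simp add: mult_left_mono)
  also have "\<dots> \<le> l * (l ^ (2 ^ k - 1))\<^sup>2"
    using IH assms(1) by (intro mult_left_mono power_mono) auto
  also have "\<dots> = l ^ (1 + (2 ^ k - 1) * 2)" by (simp add: power_mult power_add)
  also have "1 + (2 ^ k - 1) * 2 = (2::nat) ^ Suc k - 1"
    by (cases "(2::nat) ^ k") auto
  finally show ?case .
qed simp

lemma equilibrium_telescoped:
  assumes eq: "is_equilibrium l b s" and k: "1 \<le> k" "k \<le> b"
  shows "s k = l * ((s (k - 1))\<^sup>2 - (s b)\<^sup>2)"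
  using k(2,1)
proof (induction k rule: inc_induct)
  case base
  have "l * ((s (b - 1))\<^sup>2 - (s b)\<^sup>2) - (s b - s (b + 1)) = 0" "s (b + 1) = 0"
    using eq base unfolding is_equilibrium_def by auto
  then show ?case by simp
next
  case (step n)
  have "l * ((s (n - 1))\<^sup>2 - (s n)\<^sup>2) - (s n - s (Suc n)) = 0"
    using eq step unfolding is_equilibrium_def by auto
  moreover have "s (Suc n) = l * ((s n)\<^sup>2 - (s b)\<^sup>2)" using step by simp
  ultimately show ?case by (simp add: algebra_simps)
qed

lemma equilibrium_last_le:
  assumes eq: "is_equilibrium l b s" and "k \<le> b"
  shows "s b \<le> s k"
  using assms(2)
proof (induction k rule: inc_induct)
  case (step n)
  have "Suc n \<in> {1..b}" using step by simp
  then have "s (Suc n) \<le> s n" using eq unfolding is_equilibrium_def by fastforce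
  then show ?case using step by linarith
qed simp

lemma equilibrium_eq_orbit:
  assumes eq: "is_equilibrium l b s" and "k \<le> b"
  shows "s k = orbit l (s b) k"
  using assms(2)
proof (induction k)
  case 0
  then show ?case using eq unfolding is_equilibrium_def by simp
next
  case (Suc k)
  then show ?case using equilibrium_telescoped[OF eq, of "Suc k"] by simp
qed

lemma equilibrium_orbit_nonneg:
  assumes eq: "is_equilibrium l b s" and "j \<le> b"
  shows "0 \<le> orbit l (s b) j"
  using equilibrium_eq_orbit[OF assms] equilibrium_last_le[OF assms] eq
  unfolding is_equilibrium_def by linarith

text \<open>The last coordinate \<open>t\<close> is a zero of the margin \<open>min\<^sub>j\<^sub>\<le>\<^sub>b orbit l t j - t\<close>,
  which is positive at \<open>t = 0\<close> and negative at \<open>t = 1\<close>; the minimum is attained at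
  \<open>j = b\<close> because \<open>orbit l t (j + 1) = 0 < t\<close> whenever \<open>orbit l t j = t\<close>.\<close>
lemma equilibrium_exists:
  assumes l: "0 < l" "l \<le> 1" and b: "1 \<le> b"
  shows "\<exists>s. is_equilibrium l b s"
proof -
  have m0: "0 < orbit_margin l 0 b"
    using orbit_margin_attained[of b l 0] orbit_zero_pos[OF l(1)] by force
  have m1: "orbit_margin l 1 b < 0" using orbit_margin_le[OF b, of l 1] by simp
  obtain t where "0 \<le> t" "t \<le> 1" "orbit_margin l t b = 0"
    using IVT2'[of "\<lambda>t. orbit_margin l t b" 1 0 0] m0 m1 continuous_on_orbit_margin by force
  with m0 m1 have t: "0 < t" "t < 1" "orbit_margin l t b = 0"
    by (metis order.not_eq_order_implies_strict less_irrefl)+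
  have ge: "t \<le> orbit l t j" if "j \<le> b" for j using orbit_margin_le[OF that, of l t] t by simp
  obtain j where j: "j \<le> b" "orbit l t j = t" using orbit_margin_attained[of b l t] t by force
  have "j = b"
  proof (rule ccontr)
    assume "j \<noteq> b"
    then have "Suc j \<le> b" using j by simp
    then have "t \<le> orbit l t (Suc j)" by (rule ge)
    also have "\<dots> = 0" using j by simp
    finally show False using t by simp
  qed
  have nonneg: "0 \<le> orbit l t j" if "j \<le> b" for j using ge[OF that] t by simp
  define s where "s k = (if k \<le> b then orbit l t k else 0)" for k
  have "is_equilibrium l b s"
    unfolding is_equilibrium_def
  proof (intro conjI ballI allI impI)
    fix k assume k: "k \<in> {1..b}"
    then obtain m where m: "k = Suc m" "m < b" by (cases k) auto
    show "s k \<le> s (k - 1)"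
      using orbit_step_le[OF l nonneg orbit_le_one[OF l]] nonneg m by (simp add: s_def)
    show "l * ((s (k - 1))\<^sup>2 - (s k)\<^sup>2) - (s k - s (k + 1)) = 0"
      using m j \<open>j = b\<close> by (cases "k = b") (auto simp: s_def algebra_simps)
  qed (use nonneg in \<open>simp_all add: s_def\<close>)
  then show ?thesis by blast
qed

lemma equilibrium_unique:
  assumes l: "0 < l" and s: "is_equilibrium l b s" and s': "is_equilibrium l b s'"
  shows "s = s'"
proof -
  have last_not_less: "\<not> u b < v b"
    if u: "is_equilibrium l b u" and v: "is_equilibrium l b v" for u v
  proof
    assume lt: "u b < v b"
    have "0 < b"
    proof (rule ccontr)
      assume "\<not> 0 < b"
      then have "u b = 1" "v b = 1" using u v unfolding is_equilibrium_def by simp_all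
      then show False using lt by simp
    qed
    have "0 \<le> u b" using u unfolding is_equilibrium_def by simp
    have "v b = orbit l (v b) b" using equilibrium_eq_orbit[OF v order.refl] .
    also have "\<dots> < orbit l (u b) b"
      using orbit_strict_antimono[OF l \<open>0 \<le> u b\<close> lt] equilibrium_orbit_nonneg[OF v] \<open>0 < b\<close>
      by simp
    also have "\<dots> = u b" using equilibrium_eq_orbit[OF u order.refl, symmetric] .
    finally show False using lt by simp
  qed
  have last: "s b = s' b" using last_not_less[OF s s'] last_not_less[OF s' s] by simp
  show "s = s'"
  proof
    fix k
    show "s k = s' k"
    proof (cases "k \<le> b")
      case True
      then show ?thesis using equilibrium_eq_orbit[OF s True] equilibrium_eq_orbit[OF s' True] last
        by simp
    next
      case False
      then show ?thesis using s s' unfolding is_equilibrium_def by simp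
    qed
  qed
qed

lemma sstar_is_equilibrium:
  assumes "0 < l" "l \<le> 1" "1 \<le> b"
  shows "is_equilibrium l b (sstar l b)"
proof -
  obtain s where s: "is_equilibrium l b s" using equilibrium_exists[OF assms] by blast
  show ?thesis
    unfolding sstar_def
    by (rule theI[of "is_equilibrium l b", OF s equilibrium_unique[OF assms(1) _ s]])
qed

lemma sstar_le_power:
  assumes "0 < l" "l \<le> 1" "1 \<le> b" "k \<le> b"
  shows "sstar l b k \<le> l ^ (2 ^ k - 1)"
proof -
  note eq = sstar_is_equilibrium[OF assms(1-3)]
  have "sstar l b k = orbit l (sstar l b b) k" using equilibrium_eq_orbit[OF eq assms(4)] .
  also have "\<dots> \<le> l ^ (2 ^ k - 1)"
    using orbit_le_power[OF assms(1)] equilibrium_orbit_nonneg[OF eq] assms(4) by simp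
  finally show ?thesis .
qed

lemma add_le_sqrt_if_le_quarter_gap:
  fixes l x :: real
  assumes "1/4 \<le> l" "l \<le> 1" "x \<le> (1 - l) / 4"
  shows "l + x \<le> sqrt l"
proof -
  define r where "r = sqrt l"
  have r: "r * r = l" "r \<le> 1" using assms by (auto simp: r_def)
  have "1/2 \<le> r" unfolding r_def using assms by (intro real_le_rsqrt) (simp add: power2_eq_square)
  have "(1 - l) / 4 = (1 - r) * ((1 + r) / 4)" using r by (simp add: algebra_simps)
  also have "\<dots> \<le> (1 - r) * r" using r \<open>1/2 \<le> r\<close> by (intro mult_left_mono) auto
  finally have "x \<le> (1 - r) * r" using assms by linarith
  then show ?thesis using r unfolding r_def[symmetric] by (simp add: algebra_simps)
qed

lemma one_minus_power_le_exp:
  fixes e y :: real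
  assumes "0 \<le> e" "e \<le> 1" "y \<le> e * real n"
  shows "(1 - e) ^ n \<le> exp (- y)"
proof -
  have "(1 - e) ^ n \<le> exp (- e) ^ n"
    using assms exp_ge_add_one_self[of "- e"] by (intro power_mono) auto
  also have "\<dots> = exp (- (e * real n))" by (simp add: exp_of_nat_mult[symmetric] mult.commute)
  also have "\<dots> \<le> exp (- y)" using assms by simp
  finally show ?thesis .
qed

lemma powr_le_two_power:
  fixes x c :: real
  assumes "0 < x" "c * log 2 x \<le> real k"
  shows "x powr c \<le> 2 ^ k"
proof -
  have "x powr c = (2 powr log 2 x) powr c" using assms(1) by simp
  also have "\<dots> = 2 powr (c * log 2 x)" by (simp add: powr_powr mult.commute)
  also have "\<dots> \<le> 2 powr (real k)" using assms(2) by (intro powr_mono) auto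
  finally show ?thesis by (simp add: powr_realpow)
qed

lemma lam_power_two_power_le:
  assumes "0 < N" "0 < \<gamma>" "\<gamma> / real N powr \<alpha> \<le> 1"
    and "(\<alpha> + \<xi>) * log 2 (real N) \<le> real k"
  shows "lam \<gamma> \<alpha> N ^ (2 ^ k) \<le> exp (- \<gamma> * real N powr \<xi>)"
proof -
  define e where "e = \<gamma> / real N powr \<alpha>"
  have "\<gamma> * real N powr \<xi> = e * real N powr (\<alpha> + \<xi>)"
    using assms(1) by (simp add: e_def powr_add)
  also have "\<dots> \<le> e * 2 ^ k"
    using powr_le_two_power assms by (intro mult_left_mono) (auto simp: e_def)
  finally have "\<gamma> * real N powr \<xi> \<le> e * real (2 ^ k)" by simp
  then show ?thesis
    using one_minus_power_le_exp[of e] assms(2,3) by (simp add: lam_def e_def)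
qed

theorem lemma16:
  fixes \<gamma> \<alpha> \<xi> :: real and b :: "nat \<Rightarrow> nat"
  assumes "0 < \<gamma>" "\<gamma> \<le> 1" "0 < \<alpha>" "\<alpha> < 0.25" "0 < \<xi>"
    and "\<forall>N. 1 \<le> b N"
    and "(\<lambda>N. real (b N)) \<in> O(\<lambda>N. ln (real N))"
  shows "\<forall>\<^sub>F N in sequentially. \<forall>k::nat.
           (\<alpha> + \<xi>) * log 2 (real N) \<le> real k \<and> k \<le> b N \<longrightarrow>
             lam \<gamma> \<alpha> N * (sstar (lam \<gamma> \<alpha> N) (b N) k + 1)
               \<le> lam \<gamma> \<alpha> N * (lam \<gamma> \<alpha> N ^ (2 ^ k - 1) + 1) \<and>
             lam \<gamma> \<alpha> N * (lam \<gamma> \<alpha> N ^ (2 ^ k - 1) + 1) \<le> sqrt (lam \<gamma> \<alpha> N)"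
proof -
  have "\<forall>\<^sub>F N in sequentially. 1 \<le> N" by (rule eventually_ge_at_top)
  moreover have "\<forall>\<^sub>F N in sequentially. \<gamma> / real N powr \<alpha> \<le> 3/4"
    using assms(1,3) by real_asymp
  moreover have "\<forall>\<^sub>F N in sequentially. exp (- \<gamma> * real N powr \<xi>) \<le> \<gamma> / real N powr \<alpha> / 4"
    using assms(1,3,5) by real_asymp
  ultimately show ?thesis
  proof eventually_elim
    case (elim N)
    define l where "l = lam \<gamma> \<alpha> N"
    have gap: "1 - l = \<gamma> / real N powr \<alpha>" by (simp add: l_def lam_def)
    moreover have "0 < \<gamma> / real N powr \<alpha>" using elim assms(1) by simp
    ultimately have l: "0 < l" "1/4 \<le> l" "l \<le> 1" using elim by linarith+
    show ?case unfolding l_def[symmetric]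
    proof (intro allI impI conjI)
      fix k assume k: "(\<alpha> + \<xi>) * log 2 (real N) \<le> real k \<and> k \<le> b N"
      show "l * (sstar l (b N) k + 1) \<le> l * (l ^ (2 ^ k - 1) + 1)"
        using sstar_le_power[OF l(1,3)] assms(6) k l(1) by simp
      have "\<gamma> / real N powr \<alpha> \<le> 1" using elim(2) by linarith
      then have "l ^ 2 ^ k \<le> exp (- \<gamma> * real N powr \<xi>)"
        using lam_power_two_power_le[of N \<gamma> \<alpha> \<xi> k] assms(1) elim(1) k by (simp add: l_def)
      also have "\<dots> \<le> (1 - l) / 4" using elim(3) gap by simp
      finally have "l ^ 2 ^ k \<le> (1 - l) / 4" .
      then have "l + l ^ 2 ^ k \<le> sqrt l" by (rule add_le_sqrt_if_le_quarter_gap[OF l(2,3)])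
      moreover have "l * (l ^ (2 ^ k - 1) + 1) = l ^ 2 ^ k + l"
        using power_minus_mult[of "2 ^ k" l] by (simp add: algebra_simps)
      ultimately show "l * (l ^ (2 ^ k - 1) + 1) \<le> sqrt l" by simp
    qed
  qed
qed

end
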